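(* Let $z$ with $d(z,\mathcal{M})=O(\sigma)$, projection $z^*$, and $\Delta=\|z-z^*\|_2$. Choose Cartesian coordinates in which $z^*$ is the origin, $T_{z^*}\mathcal{M}$ is spanned by the first $d$ coordinate directions, and $z=(0,\dots,0,\Delta,0,\dots,0)$ with $\Delta$ in the $(d+1)$-th coordinate. Let $r_0=C\sigma$ and write $\mu_z^{\mathbb{B}}=\mathbb{E}_{Y\sim\nu}(Y\mid Y\in\mathcal{B}_D(z,r_0))=(\mu^{(1)},\dots,\mu^{(D)})$. If $|\Delta-\mu^{(d+1)}|\ge c_1\sigma$ and $|\mu^{(i)}|\le c_2\sigma^2\sqrt{\log(1/\sigma)}$ for all $i\ne d+1$, then $\sin\{\Theta(\mu_z^{\mathbb{B}}-z,\ z^*-z)\}\le C\sigma\sqrt{\log(1/\sigma)}$, where $\Theta(a,b)$ is the angle between vectors $a,b$.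
   Context: Model: $\mathcal{M}\subset\mathbb{R}^D$ is a compact, twice-differentiable, $d$-dimensional embedded submanifold with $d$-dimensional Hausdorff volume at most $V$ and reach at least $\tau>0$. $X$ is uniform on $\mathcal{M}$, $\xi\sim N(0,\sigma^2I_D)$ independent, and $Y=X+\xi$ has density $\nu$. $z^*=\arg\min_{x\in\mathcal{M}}\|x-z\|_2$. $\sigma$ is sufficiently small; $c_1,c_2,C$ are constants independent of $\sigma$. *)

theory Defs
  imports "HOL-Probability.Probability"
begin

definition vec_angle :: "'a::real_inner \<Rightarrow> 'a \<Rightarrow> real" where
  "vec_angle a b = arccos ((a \<bullet> b) / (norm a * norm b))"

text \<open>A twice-differentiable local parametrisation (chart) of M around p,
  with parameter space the euclidean space 'd (so d = DIM('d)).
  phi is an injective immersion of the open set U, a homeomorphism onto the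
  relatively open piece M \<inter> W, with a differentiable derivative phi'.\<close>
definition C2_chart ::
  "'a::euclidean_space set \<Rightarrow> 'd::euclidean_space set \<Rightarrow> 'a set \<Rightarrow> ('d \<Rightarrow> 'a)
     \<Rightarrow> ('d \<Rightarrow> ('d \<Rightarrow>\<^sub>L 'a)) \<Rightarrow> bool" where
  "C2_chart M U W \<phi> \<phi>' \<longleftrightarrow>
     open U \<and> open W \<and> \<phi> ` U = M \<inter> W \<and> inj_on \<phi> U \<and>
     continuous_on (M \<inter> W) (inv_into U \<phi>) \<and>
     (\<forall>u\<in>U. (\<phi> has_derivative blinfun_apply (\<phi>' u)) (at u)) \<and>
     \<phi>' differentiable_on U \<and>
     (\<forall>u\<in>U. inj (blinfun_apply (\<phi>' u)))"

definition C2_submanifold :: "'d::euclidean_space itself \<Rightarrow> 'a::euclidean_space set \<Rightarrow> bool" where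
  "C2_submanifold TYPE('d) M \<longleftrightarrow>
     (\<forall>p\<in>M. \<exists>(U::'d set) W \<phi> \<phi>'. C2_chart M U W \<phi> \<phi>' \<and> p \<in> W)"

definition is_tangent_space :: "'d::euclidean_space itself \<Rightarrow> 'a::euclidean_space set \<Rightarrow> 'a \<Rightarrow> 'a set \<Rightarrow> bool" where
  "is_tangent_space TYPE('d) M p S \<longleftrightarrow>
     (\<exists>(U::'d set) W \<phi> \<phi>' u. C2_chart M U W \<phi> \<phi>' \<and> u \<in> U \<and> \<phi> u = p \<and>
        S = range (blinfun_apply (\<phi>' u)))"

text \<open>reach(M) \<ge> tau: every point at distance < tau from M has a unique nearest point in M.\<close>
definition reach_ge :: "'a::euclidean_space set \<Rightarrow> real \<Rightarrow> bool" where
  "reach_ge M \<tau> \<longleftrightarrow>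
     (\<forall>x. infdist x M < \<tau> \<longrightarrow> (\<exists>!y. y \<in> M \<and> dist x y = infdist x M))"

definition gaussian_noise :: "real \<Rightarrow> 'a::euclidean_space measure" where
  "gaussian_noise \<sigma> = density lborel
     (\<lambda>y. ennreal ((2 * pi * \<sigma>\<^sup>2) powr (- real DIM('a) / 2) * exp (- (norm y)\<^sup>2 / (2 * \<sigma>\<^sup>2))))"

definition noisy_law :: "'a::euclidean_space measure \<Rightarrow> real \<Rightarrow> 'a measure" where
  "noisy_law PX \<sigma> = distr (PX \<Otimes>\<^sub>M gaussian_noise \<sigma>) borel (\<lambda>(x, \<xi>). x + \<xi>)"

definition cond_mean :: "'a::euclidean_space measure \<Rightarrow> 'a set \<Rightarrow> 'a" where
  "cond_mean \<nu> B = (1 / measure \<nu> B) *\<^sub>R (\<integral>y\<in>B. y \<partial>\<nu>)"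

end

theory Submission
  imports Defs
begin

text \<open>Put \<open>v = \<mu> - z\<close>. Since \<open>p - z\<close> is a nonzero multiple of the frame vector \<open>e\<close>, the angle
  in question is the angle between \<open>v\<close> and \<open>e\<close>, whose sine is the length of the component of
  \<open>v\<close> orthogonal to \<open>e\<close> divided by \<open>norm v\<close>. In the orthonormal frame \<open>B\<close>, the coordinate
  \<open>v \<bullet> e = (\<mu> - p) \<bullet> e - norm (z - p)\<close> is at least \<open>c1 \<sigma>\<close> in absolute value, while every
  other coordinate of \<open>v\<close> is a coordinate of \<open>\<mu> - p\<close>, of size \<open>c2 \<sigma>\<^sup>2 sqrt (ln (1/\<sigma>))\<close>. Hence
  the sine is at most \<open>sqrt D c2 \<sigma>\<^sup>2 sqrt (ln (1/\<sigma>)) / (c1 \<sigma>)\<close>. Once the two coordinate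
  estimates are assumed, the manifold, the reach and the noise model play no further role.\<close>

lemma norm_power2_eq_sum_inner_orthonormal:
  fixes v :: "'a::euclidean_space"
  assumes unit: "\<forall>b\<in>B. norm b = 1" and orth: "pairwise orthogonal B" and card: "card B = DIM('a)"
  shows "(norm v)\<^sup>2 = (\<Sum>b\<in>B. (v \<bullet> b)\<^sup>2)"
proof -
  have "finite B" using orth pairwise_orthogonal_imp_finite by blast
  moreover have "independent B"
    using orth unit pairwise_orthogonal_independent by force
  ultimately have span: "span B = UNIV"
    using card card_eq_dim[of B UNIV] by (auto simp: dim_UNIV)
  let ?residual = "v - (\<Sum>b\<in>B. (b \<bullet> v / (b \<bullet> b)) *\<^sub>R b)"
  \<comment> \<open>the residual is orthogonal to \<open>span B = UNIV\<close>, in particular to itself\<close>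
  have "orthogonal ?residual ?residual"
    using span by (intro Gram_Schmidt_step[OF orth]) simp
  moreover have "b \<bullet> b = 1" if "b \<in> B" for b
    using unit that by (metis norm_eq_1)
  ultimately have expansion: "v = (\<Sum>b\<in>B. (b \<bullet> v) *\<^sub>R b)"
    by (simp add: orthogonal_def)
  have "(norm v)\<^sup>2 = v \<bullet> (\<Sum>b\<in>B. (b \<bullet> v) *\<^sub>R b)"
    using expansion by (metis power2_norm_eq_inner)
  also have "\<dots> = (\<Sum>b\<in>B. (v \<bullet> b)\<^sup>2)"
    by (simp add: inner_sum_right power2_eq_square inner_commute)
  finally show ?thesis .
qed

lemma abs_inner_divide_norms_le_1: "\<bar>(a \<bullet> b) / (norm a * norm b)\<bar> \<le> 1"
  using Cauchy_Schwarz_ineq2[of a b]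
  by (cases "a = 0 \<or> b = 0") (auto simp: abs_mult divide_le_eq_1)

lemma sin_vec_angle: "sin (vec_angle a b) = sqrt (1 - ((a \<bullet> b) / (norm a * norm b))\<^sup>2)"
  unfolding vec_angle_def using sin_arccos_abs abs_inner_divide_norms_le_1 by blast

lemma sin_vec_angle_scaleR_right:
  assumes "c \<noteq> 0"
  shows "sin (vec_angle a (c *\<^sub>R b)) = sin (vec_angle a b)"
  using assms by (simp add: sin_vec_angle power_divide power_mult_distrib)

lemma sin_vec_angle_le_off_axis:
  fixes v e :: "'a::euclidean_space"
  assumes unit: "\<forall>b\<in>B. norm b = 1" and orth: "pairwise orthogonal B" and card: "card B = DIM('a)"
    and "e \<in> B" and "0 < a" and on_axis: "a \<le> \<bar>v \<bullet> e\<bar>"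
    and "0 \<le> K" and off_axis: "\<forall>b\<in>B - {e}. \<bar>v \<bullet> b\<bar> \<le> K"
  shows "sin (vec_angle v e) \<le> sqrt (real DIM('a)) * K / a"
proof -
  have "finite B" using orth pairwise_orthogonal_imp_finite by blast
  have "norm e = 1" using unit \<open>e \<in> B\<close> by blast
  have "(norm v)\<^sup>2 - (v \<bullet> e)\<^sup>2 = (\<Sum>b\<in>B - {e}. (v \<bullet> b)\<^sup>2)"
    using norm_power2_eq_sum_inner_orthonormal[OF unit orth card, of v] \<open>finite B\<close> \<open>e \<in> B\<close>
    by (simp add: sum.remove)
  also have "\<dots> \<le> (\<Sum>b\<in>B - {e}. K\<^sup>2)"
    using off_axis \<open>0 \<le> K\<close> by (intro sum_mono) (metis abs_le_square_iff abs_of_nonneg)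
  also have "\<dots> \<le> real DIM('a) * K\<^sup>2"
    using card \<open>finite B\<close> by (simp add: card_Diff_subset_Int mult_right_mono)
  finally have orthogonal_part: "(norm v)\<^sup>2 - (v \<bullet> e)\<^sup>2 \<le> real DIM('a) * K\<^sup>2" .
  have "\<bar>v \<bullet> e\<bar> \<le> norm v"
    using Cauchy_Schwarz_ineq2[of v e] \<open>norm e = 1\<close> by simp
  with on_axis \<open>0 < a\<close> have "a \<le> norm v" "0 < norm v" by linarith+
  have "sin (vec_angle v e) = sqrt (1 - ((v \<bullet> e) / norm v)\<^sup>2)"
    using \<open>norm e = 1\<close> by (simp add: sin_vec_angle)
  also have "\<dots> = sqrt (((norm v)\<^sup>2 - (v \<bullet> e)\<^sup>2) / (norm v)\<^sup>2)"
    using \<open>0 < norm v\<close> by (simp add: power_divide diff_divide_distrib)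
  also have "\<dots> = sqrt ((norm v)\<^sup>2 - (v \<bullet> e)\<^sup>2) / norm v"
    by (simp add: real_sqrt_divide)
  also have "\<dots> \<le> sqrt (real DIM('a) * K\<^sup>2) / a"
    using orthogonal_part \<open>a \<le> norm v\<close> \<open>0 < a\<close> by (intro frac_le) auto
  also have "\<dots> = sqrt (real DIM('a)) * K / a"
    using \<open>0 \<le> K\<close> by (simp add: real_sqrt_mult)
  finally show ?thesis .
qed

lemma sin_vec_angle_to_foot_point_le:
  fixes \<mu> z p e :: "'a::euclidean_space"
  assumes unit: "\<forall>b\<in>B. norm b = 1" and orth: "pairwise orthogonal B" and card: "card B = DIM('a)"
    and "e \<in> B" and "z \<noteq> p" and normal: "z - p = norm (z - p) *\<^sub>R e"
    and "0 < a" and normal_coordinate: "a \<le> \<bar>norm (z - p) - (\<mu> - p) \<bullet> e\<bar>"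
    and "0 \<le> K" and other_coordinates: "\<forall>b\<in>B - {e}. \<bar>(\<mu> - p) \<bullet> b\<bar> \<le> K"
  shows "sin (vec_angle (\<mu> - z) (p - z)) \<le> sqrt (real DIM('a)) * K / a"
proof -
  define \<Delta> where "\<Delta> = norm (z - p)"
  have "\<Delta> \<noteq> 0" using \<open>z \<noteq> p\<close> by (simp add: \<Delta>_def)
  have "e \<bullet> e = 1" using unit \<open>e \<in> B\<close> by (simp add: norm_eq_1)
  have "p - z = (- \<Delta>) *\<^sub>R e"
    using normal unfolding \<Delta>_def by (metis minus_diff_eq scaleR_minus_left)
  have shift: "\<mu> - z = (\<mu> - p) - \<Delta> *\<^sub>R e"
    using normal unfolding \<Delta>_def by (metis diff_diff_eq2 diff_add_cancel add_diff_cancel_left')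
  have "a \<le> \<bar>(\<mu> - z) \<bullet> e\<bar>"
    using normal_coordinate \<open>e \<bullet> e = 1\<close> by (simp add: shift \<Delta>_def inner_diff_left)
  moreover have "\<bar>(\<mu> - z) \<bullet> b\<bar> \<le> K" if "b \<in> B - {e}" for b
  proof -
    have "e \<bullet> b = 0" using orth \<open>e \<in> B\<close> that by (auto simp: pairwise_def orthogonal_def)
    then show ?thesis using other_coordinates that by (simp add: shift inner_diff_left)
  qed
  ultimately have "sin (vec_angle (\<mu> - z) e) \<le> sqrt (real DIM('a)) * K / a"
    using sin_vec_angle_le_off_axis[OF unit orth card \<open>e \<in> B\<close> \<open>0 < a\<close>] \<open>0 \<le> K\<close> by blast
  then show ?thesis
    using sin_vec_angle_scaleR_right[of "- \<Delta>" "\<mu> - z" e] \<open>p - z = (- \<Delta>) *\<^sub>R e\<close> \<open>\<Delta> \<noteq> 0\<close> by simp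
qed

theorem proposition3p2:
  fixes M :: "'a::euclidean_space set"
    and PX :: "'a measure"
    and \<tau> c0 c1 c2 Cr :: real
  assumes "compact M" and "M \<noteq> {}"
    and "C2_submanifold TYPE('d::euclidean_space) M"
    and "\<tau> > 0" and "reach_ge M \<tau>"
    and "prob_space PX" and "sets PX = sets borel" and "emeasure PX M = 1"
    and "c0 > 0" and "c1 > 0" and "c2 > 0" and "Cr > 0"
  shows "\<exists>C>0. \<exists>\<sigma>0>0. \<forall>\<sigma> z p B T e.
     0 < \<sigma> \<and> \<sigma> < \<sigma>0 \<and>
     infdist z M \<le> c0 * \<sigma> \<and>
     p \<in> M \<and> (\<forall>x\<in>M. dist z p \<le> dist z x) \<and> z \<noteq> p \<and>
     (\<forall>b\<in>B. norm b = 1) \<and> pairwise orthogonal B \<and> card B = DIM('a) \<and>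
     T \<subseteq> B \<and> card T = DIM('d) \<and> is_tangent_space TYPE('d) M p (span T) \<and>
     e \<in> B - T \<and> z - p = norm (z - p) *\<^sub>R e \<and>
     (let \<mu> = cond_mean (noisy_law PX \<sigma>) (ball z (Cr * \<sigma>)) in
        \<bar>norm (z - p) - (\<mu> - p) \<bullet> e\<bar> \<ge> c1 * \<sigma> \<and>
        (\<forall>b\<in>B - {e}. \<bar>(\<mu> - p) \<bullet> b\<bar> \<le> c2 * \<sigma>\<^sup>2 * sqrt (ln (1 / \<sigma>))))
     \<longrightarrow> sin (vec_angle (cond_mean (noisy_law PX \<sigma>) (ball z (Cr * \<sigma>)) - z) (p - z))
           \<le> C * \<sigma> * sqrt (ln (1 / \<sigma>))"
proof (intro exI[of _ "sqrt (real DIM('a)) * c2 / c1"] conjI[OF _ exI[of _ 1]] conjI allI impI,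
    goal_cases C_pos \<sigma>0_pos bound)
  case C_pos
  show ?case using \<open>c1 > 0\<close> \<open>c2 > 0\<close> by simp
next
  case \<sigma>0_pos
  show ?case by simp
next
  case (bound \<sigma> z p B T e)
  define \<mu> where "\<mu> = cond_mean (noisy_law PX \<sigma>) (ball z (Cr * \<sigma>))"
  define K where "K = c2 * \<sigma>\<^sup>2 * sqrt (ln (1 / \<sigma>))"
  from bound have "0 < \<sigma>" "\<sigma> < 1" by auto
  then have "0 \<le> K" using \<open>c2 > 0\<close> by (simp add: K_def)
  have "sin (vec_angle (\<mu> - z) (p - z)) \<le> sqrt (real DIM('a)) * K / (c1 * \<sigma>)"
    using bound \<open>0 \<le> K\<close> \<open>c1 > 0\<close>
    by (intro sin_vec_angle_to_foot_point_le[of B e z p]) (auto simp: \<mu>_def K_def Let_def)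
  also have "\<dots> = sqrt (real DIM('a)) * c2 / c1 * \<sigma> * sqrt (ln (1 / \<sigma>))"
    using \<open>0 < \<sigma>\<close> \<open>c1 > 0\<close> by (simp add: K_def power2_eq_square)
  finally show ?case by (simp add: \<mu>_def)
qed

end
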